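(* There are absolute constants $c,C>0$ such that for every $n$ and every connected simple undirected graph $G_0$ on $n$ nodes that has exactly $k\ge 1$ fewer edges than the complete graph on $n$ nodes, the triangulation process started from $G_0$ satisfies $$\Pr\big[G_{\lfloor c\,n\ln k\rfloor}\text{ is complete}\big]\le C e^{-k^{1/4}},$$ i.e., with probability at least $1-O(e^{-k^{1/4}})$ it takes $\Omega(n\log k)$ rounds to reach the complete graph.
   Context: Triangulation process: $G_0$ is a connected simple undirected graph on an $n$-node vertex set $V$. Given $G_t$, in round $t$ every node $x$ independently picks two neighbors $v,w$ of $x$ in $G_t$, independently and uniformly at random, and the edge $\{v,w\}$ is added (nothing happens if $v=w$ or the edge already exists); $G_{t+1}$ is $G_t$ together with all edges added in round $t$. Edges are never removed. *)

theory Defs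
  imports "HOL-Probability.Probability"
begin

text \<open>Graphs on the vertex set {0..<n}, given by their edge set (a set of 2-element sets).\<close>

definition all_pairs :: "nat \<Rightarrow> nat set set" where
  "all_pairs n = {{u, v} | u v. u < n \<and> v < n \<and> u \<noteq> v}"

definition simple_graph :: "nat \<Rightarrow> nat set set \<Rightarrow> bool" where
  "simple_graph n E \<longleftrightarrow> E \<subseteq> all_pairs n"

definition connected_graph :: "nat \<Rightarrow> nat set set \<Rightarrow> bool" where
  "connected_graph n E \<longleftrightarrow>
     (\<forall>u<n. \<forall>v<n. (\<lambda>x y. {x, y} \<in> E)\<^sup>*\<^sup>* u v)"

definition complete_graph :: "nat \<Rightarrow> nat set set \<Rightarrow> bool" where
  "complete_graph n E \<longleftrightarrow> E = all_pairs n"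

definition nbrs :: "nat set set \<Rightarrow> nat \<Rightarrow> nat set" where
  "nbrs E x = {v. {x, v} \<in> E}"

text \<open>Choice of node x: two neighbours, independently and uniformly at random.
  (A node without neighbours adds nothing; this never occurs for connected graphs with an
  edge.)\<close>
definition node_choice :: "nat set set \<Rightarrow> nat \<Rightarrow> (nat \<times> nat) pmf" where
  "node_choice E x =
     (if nbrs E x = {} then return_pmf (x, x)
      else pair_pmf (pmf_of_set (nbrs E x)) (pmf_of_set (nbrs E x)))"

definition tri_step :: "nat \<Rightarrow> nat set set \<Rightarrow> nat set set pmf" where
  "tri_step n E =
     map_pmf (\<lambda>f. E \<union> {{fst (f x), snd (f x)} | x. x < n \<and> fst (f x) \<noteq> snd (f x)})
       (Pi_pmf {..<n} (0, 0) (node_choice E))"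

fun tri_process :: "nat \<Rightarrow> nat set set \<Rightarrow> nat \<Rightarrow> nat set set pmf" where
  "tri_process n E 0 = return_pmf E"
| "tri_process n E (Suc t) = bind_pmf (tri_process n E t) (tri_step n)"

end

theory Submission
  imports Defs
begin

(*
  Let m(G) be the number of missing edges of G.  A missing edge can only be
  added in a round by a node that picks (in some order) its two endpoints, so the number of
  edges added in one round is at most the number of nodes whose choice is such a "bad" pair.
  The expected number of these is at most 16 m(G)/n: a node of degree d >= n/2 picks a bad
  pair with probability at most 2 m(G)/d^2, and each node of degree < n/2 has more than n/4
  non-neighbours, each giving a missing edge, so there are at most 8 m(G)/n such nodes.
  Since the nodes choose independently, this yields the exponential-moment contraction
  E[exp(-s m(G_{t+1})) | G_t] <= exp(-s (1 - 48/n) m(G_t)) for 0 <= s <= 1, and by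
  iteration E[exp(-m(G_T))] <= exp(-(1 - 48/n)^T k).  As m = 0 on the complete graph,
  Pr[G_T complete] <= exp(-(1 - 48/n)^T k), and for T <= n ln k / 192 one has
  (1 - 48/n)^T k >= sqrt k >= k^(1/4).  Small graphs (n < 96) are handled by the constant C.
*)

section \<open>Missing edges and bad pairs\<close>

definition miss :: "nat \<Rightarrow> nat set set \<Rightarrow> nat" where
  "miss n E = card (all_pairs n - E)"

definition bad_pairs :: "nat \<Rightarrow> nat set set \<Rightarrow> (nat \<times> nat) set" where
  "bad_pairs n E = {(v, w). {v, w} \<in> all_pairs n - E}"

lemma all_pairs_subset_image: "all_pairs n \<subseteq> (\<lambda>(u, v). {u, v}) ` ({..<n} \<times> {..<n})"
  unfolding all_pairs_def by auto

lemma finite_all_pairs: "finite (all_pairs n)"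
  by (rule finite_subset[OF all_pairs_subset_image]) auto

lemma card_all_pairs_le: "card (all_pairs n) \<le> n * n"
proof -
  have "card (all_pairs n) \<le> card ((\<lambda>(u, v). {u, v}) ` ({..<n} \<times> {..<n}))"
    by (rule card_mono[OF _ all_pairs_subset_image]) auto
  also have "\<dots> \<le> card ({..<n} \<times> {..<n})" by (rule card_image_le) auto
  finally show ?thesis by simp
qed

lemma miss_initial:
  assumes "simple_graph n E" "card E + k = card (all_pairs n)"
  shows "miss n E = k"
  using assms unfolding miss_def simple_graph_def
  by (subst card_Diff_subset) (auto intro: finite_subset[OF _ finite_all_pairs])

lemma finite_bad_pairs: "finite (bad_pairs n E)"
proof (rule finite_subset)
  show "bad_pairs n E \<subseteq> {..<n} \<times> {..<n}"
    unfolding bad_pairs_def all_pairs_def by (auto simp: doubleton_eq_iff)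
qed auto

text \<open>Every missing edge corresponds to at most two bad pairs.\<close>
lemma card_bad_pairs: "card (bad_pairs n E) \<le> 2 * miss n E"
proof -
  let ?M = "all_pairs n - E"
  have fin: "finite ?M" using finite_all_pairs by auto
  have eq: "bad_pairs n E = (\<Union>e\<in>?M. {(v, w). {v, w} = e})"
    unfolding bad_pairs_def by auto
  have two: "card {(v, w). {v, w} = e} \<le> 2" if "e \<in> ?M" for e
  proof -
    from that obtain a b where e: "e = {a, b}" unfolding all_pairs_def by auto
    have "{(v, w). {v, w} = e} \<subseteq> {(a, b), (b, a)}" using e by (auto simp: doubleton_eq_iff)
    hence "card {(v, w). {v, w} = e} \<le> card {(a, b), (b, a)}" by (intro card_mono) auto
    also have "\<dots> \<le> 2" by (cases "a = b") auto
    finally show ?thesis .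
  qed
  have "card (bad_pairs n E) \<le> (\<Sum>e\<in>?M. card {(v, w). {v, w} = e})"
    unfolding eq by (rule card_UN_le[OF fin])
  also have "\<dots> \<le> (\<Sum>e\<in>?M. 2)" by (rule sum_mono) (use two in auto)
  finally show ?thesis by (simp add: miss_def)
qed

lemma nbrs_subset: "simple_graph n E \<Longrightarrow> nbrs E x \<subseteq> {..<n} - {x}"
  unfolding simple_graph_def nbrs_def all_pairs_def by (auto simp: doubleton_eq_iff)

lemma finite_nbrs: "simple_graph n E \<Longrightarrow> finite (nbrs E x)"
  using nbrs_subset finite_subset by (metis finite_Diff finite_lessThan)

text \<open>Nodes of degree below n/2 have more than n/4 non-neighbours, each adjacent via a missing
  edge; counting the resulting bad pairs shows there are at most 8 m/n such nodes.\<close>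
lemma few_low_degree_nodes:
  assumes simple: "simple_graph n E" and n2: "n \<ge> 2"
  shows "card {x\<in>{..<n}. 2 * card (nbrs E x) < n} * n \<le> 8 * miss n E"
proof -
  define Low where "Low = {x\<in>{..<n}. 2 * card (nbrs E x) < n}"
  define S where "S x = {v. v < n \<and> v \<noteq> x \<and> v \<notin> nbrs E x}" for x
  have finS: "finite (S x)" for x unfolding S_def by auto
  have finL: "finite Low" unfolding Low_def by auto
  have many_non_nbrs: "n \<le> 4 * card (S x)" if "x \<in> Low" for x
  proof -
    have xn: "x < n" and dx: "2 * card (nbrs E x) < n" using that unfolding Low_def by auto
    have "{..<n} - {x} \<subseteq> S x \<union> nbrs E x" unfolding S_def by auto
    hence "card ({..<n} - {x}) \<le> card (S x \<union> nbrs E x)"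
      using finS finite_nbrs[OF simple] by (intro card_mono) auto
    also have "\<dots> \<le> card (S x) + card (nbrs E x)" by (rule card_Un_le)
    finally have "n - 1 \<le> card (S x) + card (nbrs E x)" using xn by simp
    thus ?thesis using dx n2 by linarith
  qed
  have "Sigma Low S \<subseteq> bad_pairs n E"
    unfolding Low_def S_def bad_pairs_def all_pairs_def nbrs_def by auto
  hence "card (Sigma Low S) \<le> card (bad_pairs n E)"
    using finite_bad_pairs by (rule card_mono[rotated])
  have "card Low * n = (\<Sum>x\<in>Low. n)" by simp
  also have "\<dots> \<le> (\<Sum>x\<in>Low. 4 * card (S x))" by (rule sum_mono) (use many_non_nbrs in auto)
  also have "\<dots> = 4 * card (Sigma Low S)" using finL finS by (simp add: sum_distrib_left)
  also have "\<dots> \<le> 4 * card (bad_pairs n E)" using \<open>card (Sigma Low S) \<le> _\<close> by simp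
  also have "\<dots> \<le> 8 * miss n E" using card_bad_pairs[of n E] by simp
  finally show ?thesis unfolding Low_def .
qed

section \<open>The probability that a node closes a missing edge\<close>

lemma pair_pmf_of_set:
  assumes "finite A" "A \<noteq> {}" "finite B" "B \<noteq> {}"
  shows "pair_pmf (pmf_of_set A) (pmf_of_set B) = pmf_of_set (A \<times> B)"
proof (rule pmf_eqI)
  fix z :: "'a \<times> 'b"
  obtain a b where z: "z = (a, b)" by fastforce
  show "pmf (pair_pmf (pmf_of_set A) (pmf_of_set B)) z = pmf (pmf_of_set (A \<times> B)) z"
    using assms unfolding z by (simp add: pmf_pair card_cartesian_product indicator_def)
qed

definition close_prob :: "nat \<Rightarrow> nat set set \<Rightarrow> nat \<Rightarrow> real" where
  "close_prob n E x = measure_pmf.prob (node_choice E x) (bad_pairs n E)"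

text \<open>A node of degree d picks each of the at most 2m bad pairs with probability 1/d^2.\<close>
lemma close_prob_le:
  assumes "simple_graph n E" "nbrs E x \<noteq> {}"
  shows "close_prob n E x \<le> 2 * real (miss n E) / real (card (nbrs E x))^2"
proof -
  let ?N = "nbrs E x"
  have fin: "finite ?N" using finite_nbrs[OF assms(1)] .
  have "close_prob n E x = real (card ((?N \<times> ?N) \<inter> bad_pairs n E)) / real (card (?N \<times> ?N))"
    unfolding close_prob_def node_choice_def using assms fin
    by (simp add: pair_pmf_of_set measure_pmf_of_set)
  also have "card (?N \<times> ?N) = (card ?N)^2"
    by (simp add: card_cartesian_product power2_eq_square)
  also have "card ((?N \<times> ?N) \<inter> bad_pairs n E) \<le> card (bad_pairs n E)"
    by (intro card_mono finite_bad_pairs) auto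
  hence "real (card ((?N \<times> ?N) \<inter> bad_pairs n E)) \<le> 2 * real (miss n E)"
    using card_bad_pairs[of n E] by linarith
  finally show ?thesis by (simp add: divide_right_mono)
qed

lemma close_prob_high_degree:
  assumes simple: "simple_graph n E" and n2: "n \<ge> 2" and deg: "n \<le> 2 * card (nbrs E x)"
  shows "close_prob n E x \<le> 8 * real (miss n E) / (real n)^2"
proof -
  define d where "d = card (nbrs E x)"
  have dpos: "d > 0" using deg n2 unfolding d_def by linarith
  hence ne: "nbrs E x \<noteq> {}" unfolding d_def by auto
  have "real n ^ 2 \<le> (2 * real d)^2" using deg unfolding d_def by (intro power_mono) auto
  hence d2: "real n ^ 2 / 4 \<le> real d ^ 2" by (simp add: power_mult_distrib)
  have "close_prob n E x \<le> 2 * real (miss n E) / real d ^ 2"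
    using close_prob_le[OF simple ne] unfolding d_def .
  also have "\<dots> \<le> 2 * real (miss n E) / (real n ^ 2 / 4)"
    using d2 n2 dpos by (intro divide_left_mono) auto
  finally show ?thesis by simp
qed

lemma sum_close_prob:
  assumes simple: "simple_graph n E" and n2: "n \<ge> 2"
  shows "(\<Sum>x<n. close_prob n E x) \<le> 16 * real (miss n E) / real n"
proof -
  define m where "m = real (miss n E)"
  define Low where "Low = {x\<in>{..<n}. 2 * card (nbrs E x) < n}"
  define High where "High = {x\<in>{..<n}. \<not> 2 * card (nbrs E x) < n}"
  have nr: "real n > 0" using n2 by simp
  have "{..<n} = Low \<union> High" "Low \<inter> High = {}" "finite Low" "finite High"
    unfolding Low_def High_def by auto
  hence split: "(\<Sum>x<n. close_prob n E x)
      = (\<Sum>x\<in>Low. close_prob n E x) + (\<Sum>x\<in>High. close_prob n E x)"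
    by (metis sum.union_disjoint)
  have "card High \<le> card {..<n}" unfolding High_def by (intro card_mono) auto
  have "(\<Sum>x\<in>High. close_prob n E x) \<le> (\<Sum>x\<in>High. 8 * m / (real n)^2)"
    using close_prob_high_degree[OF simple n2] unfolding High_def m_def
    by (intro sum_mono) auto
  also have "\<dots> = real (card High) * (8 * m / (real n)^2)" by simp
  also have "\<dots> \<le> real n * (8 * m / (real n)^2)"
    using \<open>card High \<le> card {..<n}\<close> by (intro mult_right_mono) (auto simp: m_def)
  also have "\<dots> = 8 * m / real n" using nr by (simp add: power2_eq_square)
  finally have high: "(\<Sum>x\<in>High. close_prob n E x) \<le> 8 * m / real n" .
  have "real (card Low) * real n \<le> 8 * m"
    using few_low_degree_nodes[OF simple n2] unfolding Low_def m_def
    by (simp flip: of_nat_mult)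
  hence "real (card Low) \<le> 8 * m / real n" using nr by (simp add: field_simps)
  moreover have "(\<Sum>x\<in>Low. close_prob n E x) \<le> real (card Low)"
    using sum_mono[of Low "close_prob n E" "\<lambda>_. 1"] by (simp add: close_prob_def)
  ultimately have low: "(\<Sum>x\<in>Low. close_prob n E x) \<le> 8 * m / real n" by linarith
  show ?thesis using split high low unfolding m_def by simp
qed

section \<open>One round of the process\<close>

definition round_graph :: "nat \<Rightarrow> nat set set \<Rightarrow> (nat \<Rightarrow> nat \<times> nat) \<Rightarrow> nat set set" where
  "round_graph n E f = E \<union> {{fst (f x), snd (f x)} | x. x < n \<and> fst (f x) \<noteq> snd (f x)}"

lemma tri_step_round_graph:
  "tri_step n E = map_pmf (round_graph n E) (Pi_pmf {..<n} (0, 0) (node_choice E))"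
  unfolding tri_step_def round_graph_def ..

text \<open>Only nodes that pick a bad pair can close a missing edge.\<close>
lemma miss_round_graph:
  "miss n E \<le> miss n (round_graph n E f) + card {x\<in>{..<n}. f x \<in> bad_pairs n E}"
proof -
  let ?M = "all_pairs n - E"
  let ?A = "{{fst (f x), snd (f x)} | x. x < n \<and> fst (f x) \<noteq> snd (f x)}"
  let ?closers = "{x\<in>{..<n}. f x \<in> bad_pairs n E}"
  have fin: "finite ?M" using finite_all_pairs by auto
  have "card ?M \<le> card ((?M - ?A) \<union> (?M \<inter> ?A))" using fin by (intro card_mono) auto
  also have "\<dots> \<le> card (?M - ?A) + card (?M \<inter> ?A)" by (rule card_Un_le)
  also have "?M \<inter> ?A \<subseteq> (\<lambda>x. {fst (f x), snd (f x)}) ` ?closers"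
    unfolding bad_pairs_def by auto
  hence "card (?M \<inter> ?A) \<le> card ((\<lambda>x. {fst (f x), snd (f x)}) ` ?closers)"
    by (intro card_mono) auto
  also have "\<dots> \<le> card ?closers" by (rule card_image_le) auto
  also have "?M - ?A = all_pairs n - round_graph n E f" unfolding round_graph_def by auto
  finally show ?thesis unfolding miss_def by simp
qed

text \<open>Nodes only pick neighbours, so a round adds edges between existing nodes only.\<close>
lemma round_graph_simple:
  assumes simple: "simple_graph n E" and f: "f \<in> set_pmf (Pi_pmf {..<n} (0, 0) (node_choice E))"
  shows "simple_graph n (round_graph n E f)"
proof -
  have fx: "f x \<in> set_pmf (node_choice E x)" if "x < n" for x
    using f that by (auto simp: set_Pi_pmf PiE_dflt_def)
  have "{fst (f x), snd (f x)} \<in> all_pairs n" if x: "x < n" "fst (f x) \<noteq> snd (f x)" for x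
  proof -
    have "nbrs E x \<noteq> {}" using fx[OF x(1)] x(2) unfolding node_choice_def by auto
    hence "f x \<in> nbrs E x \<times> nbrs E x"
      using fx[OF x(1)] finite_nbrs[OF simple] unfolding node_choice_def by auto
    hence "fst (f x) < n" "snd (f x) < n" using nbrs_subset[OF simple, of x] by auto
    thus ?thesis using x unfolding all_pairs_def by auto
  qed
  thus ?thesis using simple unfolding simple_graph_def round_graph_def by auto
qed

lemma integrable_bounded_pmf:
  "(\<And>x. \<bar>g x\<bar> \<le> B) \<Longrightarrow> integrable (measure_pmf q) (g :: _ \<Rightarrow> real)"
  by (rule measure_pmf.integrable_const_bound[where B=B]) auto

lemma exp_le_one_plus_three: "0 \<le> s \<Longrightarrow> s \<le> 1 \<Longrightarrow> exp s \<le> 1 + 3 * (s::real)"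
proof -
  assume s: "0 \<le> s" "s \<le> 1"
  have "exp (s/2) \<le> 1 + 2 * (s/2)" using s by (intro real_exp_bound_lemma) auto
  hence "exp (s/2) ^ 2 \<le> (1 + s)^2" by (intro power_mono) auto
  also have "exp (s/2) ^ 2 = exp s" by (simp flip: exp_of_nat_mult)
  moreover have "s * s \<le> s" using s by (simp add: mult_left_le)
  ultimately show ?thesis by (simp add: power2_eq_square algebra_simps)
qed

lemma node_exp_moment:
  "measure_pmf.expectation (node_choice E x) (\<lambda>v. if v \<in> bad_pairs n E then exp s else 1)
     \<le> exp ((exp s - 1) * close_prob n E x)"
proof -
  have eq: "(\<lambda>v. if v \<in> bad_pairs n E then exp s else 1)
      = (\<lambda>v. 1 + (exp s - 1) * indicator (bad_pairs n E) v)"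
    by (auto simp: indicator_def)
  have "measure_pmf.expectation (node_choice E x) (\<lambda>v. 1 + (exp s - 1) * indicator (bad_pairs n E) v)
      = 1 + (exp s - 1) * close_prob n E x"
  proof -
    have "integrable (measure_pmf (node_choice E x)) (\<lambda>v. (exp s - 1) * indicator (bad_pairs n E) v)"
      by (rule integrable_bounded_pmf[where B="\<bar>exp s - 1\<bar>"]) (auto simp: indicator_def)
    moreover have "measure_pmf.expectation (node_choice E x) (indicator (bad_pairs n E))
        = close_prob n E x"
      unfolding close_prob_def by (subst Bochner_Integration.integral_indicator) simp
    ultimately show ?thesis by (subst Bochner_Integration.integral_add) auto
  qed
  also have "\<dots> \<le> exp ((exp s - 1) * close_prob n E x)" by (rule exp_ge_add_one_self)
  finally show ?thesis unfolding eq .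
qed

text \<open>The key one-round estimate: the exponential moment of the number of missing edges
  contracts by the factor 1 - 48/n in the exponent, by independence of the nodes' choices.\<close>
lemma round_exp_moment:
  assumes simple: "simple_graph n E" and n2: "n \<ge> 2" and s: "0 \<le> s" "s \<le> 1"
  shows "measure_pmf.expectation (tri_step n E) (\<lambda>G. exp (- s * real (miss n G)))
         \<le> exp (- (s * (1 - 48 / real n)) * real (miss n E))"
proof -
  define m where "m = real (miss n E)"
  define h where "h v = (if v \<in> bad_pairs n E then exp s else 1)" for v :: "nat \<times> nat"
  let ?P = "Pi_pmf {..<n} (0, 0) (node_choice E)"
  have h_nonneg: "0 \<le> h v" for v unfolding h_def by auto
  have h_bounded: "\<bar>h v\<bar> \<le> exp s" for v unfolding h_def using s by auto
  have pointwise: "exp (- s * real (miss n (round_graph n E f))) \<le> exp (- s * m) * (\<Prod>x<n. h (f x))"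
    for f
  proof -
    let ?c = "real (card {x\<in>{..<n}. f x \<in> bad_pairs n E})"
    have "(\<Prod>x<n. h (f x)) = exp (s * ?c)"
      unfolding h_def by (simp add: prod.If_cases exp_of_nat_mult[symmetric] Int_def conj_commute)
    moreover have "s * m \<le> s * (real (miss n (round_graph n E f)) + ?c)"
      using miss_round_graph[of n E f] s unfolding m_def by (intro mult_left_mono) auto
    ultimately show ?thesis by (simp add: exp_add[symmetric] algebra_simps)
  qed
  have "measure_pmf.expectation (tri_step n E) (\<lambda>G. exp (- s * real (miss n G)))
        = measure_pmf.expectation ?P (\<lambda>f. exp (- s * real (miss n (round_graph n E f))))"
    unfolding tri_step_round_graph by simp
  also have "\<dots> \<le> measure_pmf.expectation ?P (\<lambda>f. exp (- s * m) * (\<Prod>x<n. h (f x)))"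
    using s by (intro integral_mono pointwise integrable_bounded_pmf[where B=1]
        integrable_mult_right integrable_prod_Pi_pmf integrable_bounded_pmf[where B="exp s"]
        h_bounded) auto
  also have "\<dots> = exp (- s * m) * (\<Prod>x<n. measure_pmf.expectation (node_choice E x) h)"
    by (subst integral_mult_right_zero, subst expectation_prod_Pi_pmf)
       (auto intro!: integrable_bounded_pmf[where B="exp s"] h_bounded h_nonneg)
  also have "\<dots> \<le> exp (- s * m) * (\<Prod>x<n. exp ((exp s - 1) * close_prob n E x))"
    using node_exp_moment[of E _ n s] unfolding h_def[symmetric]
    by (intro mult_left_mono prod_mono conjI)
       (auto intro!: Bochner_Integration.integral_nonneg h_nonneg)
  also have "(\<Prod>x<n. exp ((exp s - 1) * close_prob n E x))
      = exp ((exp s - 1) * (\<Sum>x<n. close_prob n E x))"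
    by (simp add: exp_sum sum_distrib_left)
  also have "\<dots> \<le> exp ((3 * s) * (16 * m / real n))"
  proof -
    have "0 \<le> exp s - 1" "exp s - 1 \<le> 3 * s" using exp_le_one_plus_three[OF s] s by auto
    moreover have "0 \<le> (\<Sum>x<n. close_prob n E x)" by (simp add: sum_nonneg close_prob_def)
    ultimately have "(exp s - 1) * (\<Sum>x<n. close_prob n E x) \<le> (3 * s) * (16 * m / real n)"
      using sum_close_prob[OF simple n2] unfolding m_def by (intro mult_mono) auto
    thus ?thesis by simp
  qed
  also have "exp (- s * m) * exp ((3 * s) * (16 * m / real n)) = exp (- (s * (1 - 48 / real n)) * m)"
    by (simp add: exp_add[symmetric] algebra_simps)
  finally show ?thesis unfolding m_def by simp
qed

section \<open>Iterating along the process\<close>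

lemma expectation_bind_pmf:
  fixes g :: "'b \<Rightarrow> real"
  assumes "\<And>y. \<bar>g y\<bar> \<le> B"
  shows "measure_pmf.expectation (bind_pmf M N) g
         = measure_pmf.expectation M (\<lambda>x. measure_pmf.expectation (N x) g)"
  unfolding measure_pmf_bind
  by (rule integral_bind[where K="count_space UNIV" and B=B and B'=1])
     (auto simp: assms measure_pmf.emeasure_space_1 measure_pmf_in_subprob_algebra)

lemma tri_process_simple:
  "simple_graph n E \<Longrightarrow> G \<in> set_pmf (tri_process n E t) \<Longrightarrow> simple_graph n G"
proof (induction t arbitrary: G)
  case 0 thus ?case by simp
next
  case (Suc t) thus ?case by (auto simp: tri_step_round_graph intro: round_graph_simple)
qed

lemma tri_process_exp_moment:
  assumes simple: "simple_graph n E" and n: "n \<ge> 96" and s: "0 \<le> s" "s \<le> 1"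
  shows "measure_pmf.expectation (tri_process n E t) (\<lambda>G. exp (- s * real (miss n G)))
         \<le> exp (- (s * (1 - 48 / real n) ^ t) * real (miss n E))"
  using s
proof (induction t arbitrary: s)
  case 0 thus ?case by simp
next
  case (Suc t)
  define \<rho> where "\<rho> = 1 - 48 / real n"
  have \<rho>: "0 \<le> \<rho>" "\<rho> \<le> 1" unfolding \<rho>_def using n by (auto simp: field_simps)
  have "measure_pmf.expectation (tri_process n E (Suc t)) (\<lambda>G. exp (- s * real (miss n G)))
      = measure_pmf.expectation (tri_process n E t)
          (\<lambda>G. measure_pmf.expectation (tri_step n G) (\<lambda>G. exp (- s * real (miss n G))))"
    using Suc.prems by (simp add: expectation_bind_pmf[where B=1])
  also have "\<dots> \<le> measure_pmf.expectation (tri_process n E t) (\<lambda>G. exp (- (s * \<rho>) * real (miss n G)))"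
  proof (rule integral_mono_AE)
    show "AE G in measure_pmf (tri_process n E t).
        measure_pmf.expectation (tri_step n G) (\<lambda>G. exp (- s * real (miss n G)))
          \<le> exp (- (s * \<rho>) * real (miss n G))"
      using round_exp_moment[OF tri_process_simple[OF simple]] n Suc.prems
      by (auto simp: AE_measure_pmf_iff \<rho>_def)
    have "\<bar>measure_pmf.expectation (tri_step n G) (\<lambda>G. exp (- s * real (miss n G)))\<bar> \<le> 1" for G
    proof -
      have "measure_pmf.expectation (tri_step n G) (\<lambda>G. exp (- s * real (miss n G)))
          \<le> measure_pmf.expectation (tri_step n G) (\<lambda>G. 1)"
        using Suc.prems by (intro integral_mono integrable_bounded_pmf[where B=1]) auto
      moreover have "0 \<le> measure_pmf.expectation (tri_step n G) (\<lambda>G. exp (- s * real (miss n G)))"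
        by (rule Bochner_Integration.integral_nonneg) auto
      ultimately show ?thesis by simp
    qed
    then show "integrable (measure_pmf (tri_process n E t))
        (\<lambda>G. measure_pmf.expectation (tri_step n G) (\<lambda>G. exp (- s * real (miss n G))))"
      by (rule integrable_bounded_pmf)
  qed (use Suc.prems \<rho> in \<open>auto intro!: integrable_bounded_pmf[where B=1]\<close>)
  also have "\<dots> \<le> exp (- ((s * \<rho>) * \<rho> ^ t) * real (miss n E))"
    using Suc.prems \<rho> unfolding \<rho>_def by (intro Suc.IH) (auto intro: mult_le_one)
  finally show ?case by (simp add: \<rho>_def mult.assoc mult.left_commute)
qed

text \<open>The complete graph has no missing edges, so exp(-m) dominates the indicator of
  completeness.\<close>
lemma prob_complete_le_exp_moment:
  "measure_pmf.prob q {G. complete_graph n G}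
     \<le> measure_pmf.expectation q (\<lambda>G. exp (- 1 * real (miss n G)))"
proof -
  have "measure_pmf.prob q {G. complete_graph n G}
      = measure_pmf.expectation q (indicator {G. complete_graph n G})"
    by (subst Bochner_Integration.integral_indicator) simp
  also have "\<dots> \<le> measure_pmf.expectation q (\<lambda>G. exp (- 1 * real (miss n G)))"
    by (intro integral_mono integrable_bounded_pmf[where B=1])
       (auto simp: indicator_def complete_graph_def miss_def)
  finally show ?thesis .
qed

lemma ln_contraction_factor:
  assumes "real n \<ge> 96"
  shows "ln (1 - 48 / real n) \<ge> - 96 / real n"
proof -
  have x: "0 \<le> 48 / real n" "48 / real n \<le> 1/2" using assms by (auto simp: field_simps)
  have "- (48 / real n) - 2 * (48 / real n)^2 \<le> ln (1 - 48 / real n)"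
    by (rule ln_one_minus_pos_lower_bound) (use x in auto)
  moreover have "2 * (48 / real n)^2 \<le> 1 * (48 / real n)"
    unfolding power2_eq_square mult.assoc[symmetric] using x by (intro mult_right_mono) auto
  ultimately show ?thesis by simp
qed

lemma contraction_after_few_rounds:
  assumes n: "real n \<ge> 96" and k: "real k \<ge> 1"
    and T: "real T \<le> 1/192 * real n * ln (real k)"
  shows "real k powr (1/4) \<le> (1 - 48 / real n) ^ T * real k"
proof -
  define \<rho> where "\<rho> = 1 - 48 / real n"
  have \<rho>pos: "\<rho> > 0" unfolding \<rho>_def using n by (simp add: field_simps)
  have "real T * ln \<rho> \<ge> real T * (- 96 / real n)"
    using ln_contraction_factor[OF n] unfolding \<rho>_def by (intro mult_left_mono) auto
  moreover have "real T * (- 96 / real n) \<ge> (1/192 * real n * ln (real k)) * (- 96 / real n)"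
    using T n by (intro mult_right_mono_neg) auto
  moreover have "(1/192 * real n * ln (real k)) * (- 96 / real n) = - (1/2) * ln (real k)"
    using n by (simp add: field_simps)
  ultimately have "exp (- (1/2) * ln (real k)) \<le> exp (real T * ln \<rho>)" by simp
  hence "real k powr (- (1/2)) \<le> \<rho> ^ T"
    using k \<rho>pos by (simp add: powr_def exp_ln ln_realpow[symmetric])
  hence "real k powr (- (1/2)) * real k \<le> \<rho> ^ T * real k"
    by (intro mult_right_mono) auto
  moreover have "real k powr (- (1/2)) * real k = real k powr (1/2)"
    using k powr_add[of "real k" "- (1/2)" 1] by simp
  moreover have "real k powr (1/4) \<le> real k powr (1/2)" using k by (intro powr_mono) auto
  ultimately show ?thesis unfolding \<rho>_def by simp
qed

text \<open>Small graphs have at most 95^2 = 9025 < 9216 missing edges, so the constant e^9216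
  makes the bound trivial.\<close>
lemma small_graph_bound:
  assumes "n < 96" "card E + k = card (all_pairs n)"
  shows "1 \<le> exp 9216 * exp (- (real k powr (1/4)))"
proof -
  have "k \<le> n * n" using assms(2) card_all_pairs_le[of n] by linarith
  also have "\<dots> \<le> 95 * 95" using assms(1) by (intro mult_le_mono) auto
  finally have "real k \<le> 9216" by simp
  moreover have "real k powr (1/4) \<le> max 1 (real k)"
    using powr_mono[of "1/4" 1 "real k"] by (cases "real k \<ge> 1") (auto simp: powr_le1)
  ultimately have "1 \<le> exp (9216 - real k powr (1/4))" by simp
  thus ?thesis by (simp add: exp_diff exp_minus field_simps)
qed

lemma large_graph_bound:
  assumes simple: "simple_graph n E" and n: "n \<ge> 96" and k: "k \<ge> 1"
    and card: "card E + k = card (all_pairs n)"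
    and T: "real T \<le> 1/192 * real n * ln (real k)"
  shows "measure_pmf.prob (tri_process n E T) {G. complete_graph n G}
           \<le> exp (- (real k powr (1/4)))"
proof -
  have "measure_pmf.prob (tri_process n E T) {G. complete_graph n G}
      \<le> measure_pmf.expectation (tri_process n E T) (\<lambda>G. exp (- 1 * real (miss n G)))"
    by (rule prob_complete_le_exp_moment)
  also have "\<dots> \<le> exp (- (1 * (1 - 48 / real n) ^ T) * real k)"
    using tri_process_exp_moment[OF simple n, of 1 T] miss_initial[OF simple card] by simp
  also have "\<dots> \<le> exp (- (real k powr (1/4)))"
    using contraction_after_few_rounds[of n k T] n k T by simp
  finally show ?thesis .
qed

theorem theorem9:
  shows "\<exists>c::real. \<exists>C::real. c > 0 \<and> C > 0 \<and>
    (\<forall>n::nat. \<forall>E::nat set set. \<forall>k::nat.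
       simple_graph n E \<longrightarrow> connected_graph n E \<longrightarrow> k \<ge> 1 \<longrightarrow>
       card E + k = card (all_pairs n) \<longrightarrow>
       measure_pmf.prob (tri_process n E (nat \<lfloor>c * real n * ln (real k)\<rfloor>))
           {G. complete_graph n G}
         \<le> C * exp (- (real k powr (1/4))))"
proof (intro exI conjI allI impI)
  show "(1/192 :: real) > 0" "exp 9216 > (0 :: real)" by auto
  fix n :: nat and E :: "nat set set" and k :: nat
  assume simple: "simple_graph n E" and k: "k \<ge> 1" and card: "card E + k = card (all_pairs n)"
  define T where "T = nat \<lfloor>1/192 * real n * ln (real k)\<rfloor>"
  let ?P = "measure_pmf.prob (tri_process n E T) {G. complete_graph n G}"
  show "?P \<le> exp 9216 * exp (- (real k powr (1/4)))"
  proof (cases "n < 96")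
    case True
    then show ?thesis using small_graph_bound[OF True card] measure_pmf.prob_le_1 order_trans
      by blast
  next
    case False
    have "0 \<le> 1/192 * real n * ln (real k)" using k by simp
    hence "real T \<le> 1/192 * real n * ln (real k)" unfolding T_def by linarith
    hence "?P \<le> exp (- (real k powr (1/4)))"
      using large_graph_bound[OF simple _ k card] False by simp
    thus ?thesis by (simp add: order_trans)
  qed
qed

end
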